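(* With the icosahedral setting of the context, for every $y_0\in\mathcal{I}$ and every integer $n\ge0$, \[ V\left(\langle x,y_0\rangle^n\right)=\frac{n!}{\nu(n)}\,q_n(x;y_0). \]
   Context: Let $\tau=(1+\sqrt5)/2$. Vectors in $\mathbb{R}^3$ are row vectors; $\langle x,y\rangle=\sum x_iy_i$. For $v\neq0$, $x\sigma_v=x-2\frac{\langle x,v\rangle}{|v|^2}v$. Let $R_+=\{(2,0,0),(0,2,0),(0,0,2),(\tau,\pm\tau^{-1},\pm1),(\pm1,\tau,\pm\tau^{-1}),(\tau^{-1},\pm1,\tau),(-\tau^{-1},1,\tau),(\tau^{-1},1,-\tau)\}$ (15 vectors, signs independent). For real $\kappa\ge0$ the Dunkl operators are $\mathcal{D}_if(x)=\partial_if(x)+\kappa\sum_{v\in R_+}\frac{f(x)-f(x\sigma_v)}{\langle x,v\rangle}v_i$, $\langle u,\nabla_\kappa\rangle=\sum_iu_i\mathcal{D}_i$. $V$ denotes the intertwining operator: the linear operator on polynomials in $x\in\mathbb{R}^3$ with $V1=1$, $V$ maps homogeneous polynomials of degree $n$ to homogeneous polynomials of degree $n$, and $\langle u,\nabla_\kappa\rangle V p=V(\langle u,\nabla\rangle p)$ for all $u\in\mathbb{R}^3$ and polynomials $p$, where $\nabla$ is the ordinary gradient. Let $\mathcal{I}=\{(0,\pm\tau,\pm1),(\pm1,0,\pm\tau),(\pm\tau,\pm1,0)\}$. For $y_0\in\mathcal{I}$, $q_n(x;y_0)$ are defined by $\left(1-r\langle x,y_0\rangle\right)^{-1}\prod_{y\in\mathcal{I}}\left(1-r\langle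 x,y\rangle\right)^{-\kappa}=\sum_{n\ge0}q_n(x;y_0)r^n$. Define $\nu(n)=2^n(6\kappa+1)_s(5\kappa+\tfrac12)_t$ with $s=\lfloor n/2\rfloor$, $t=\lfloor (n+1)/2\rfloor$, where $(a)_k=a(a+1)\cdots(a+k-1)$ is the Pochhammer symbol. *)

theory Defs
  imports "HOL-Analysis.Analysis"
begin

definition tau :: real where "tau = (1 + sqrt 5) / 2"

definition vec3 :: "real \<Rightarrow> real \<Rightarrow> real \<Rightarrow> real^3" where
  "vec3 a b c = vector [a, b, c]"

definition refl :: "real^3 \<Rightarrow> real^3 \<Rightarrow> real^3" where
  "refl v x = x - (2 * (x \<bullet> v) / (norm v)^2) *\<^sub>R v"

definition Rplus :: "(real^3) set" where
  "Rplus = {vec3 2 0 0, vec3 0 2 0, vec3 0 0 2}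
     \<union> {vec3 tau (s * inverse tau) t | s t. s \<in> {-1,1} \<and> t \<in> {-1,1}}
     \<union> {vec3 s tau (t * inverse tau) | s t. s \<in> {-1,1} \<and> t \<in> {-1,1}}
     \<union> {vec3 (inverse tau) s tau | s. s \<in> {-1,1}}
     \<union> {vec3 (- inverse tau) 1 tau, vec3 (inverse tau) 1 (- tau)}"

definition Icos :: "(real^3) set" where
  "Icos = {vec3 0 (s * tau) t | s t. s \<in> {-1,1} \<and> t \<in> {-1,1}}
     \<union> {vec3 s 0 (t * tau) | s t. s \<in> {-1,1} \<and> t \<in> {-1,1}}
     \<union> {vec3 (s * tau) t 0 | s t. s \<in> {-1,1} \<and> t \<in> {-1,1}}"

definition mono3 :: "nat \<times> nat \<times> nat \<Rightarrow> real^3 \<Rightarrow> real" where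
  "mono3 a x = (case a of (i, j, k) \<Rightarrow> (x$1)^i * (x$2)^j * (x$3)^k)"

definition poly3 :: "(real^3 \<Rightarrow> real) \<Rightarrow> bool" where
  "poly3 p \<longleftrightarrow> (\<exists>S c. finite S \<and> p = (\<lambda>x. \<Sum>a\<in>S. c a * mono3 a x))"

definition homog3 :: "nat \<Rightarrow> (real^3 \<Rightarrow> real) \<Rightarrow> bool" where
  "homog3 n p \<longleftrightarrow> (\<exists>S c. finite S \<and> (\<forall>(i,j,k)\<in>S. i + j + k = n)
      \<and> p = (\<lambda>x. \<Sum>a\<in>S. c a * mono3 a x))"

definition partial :: "3 \<Rightarrow> (real^3 \<Rightarrow> real) \<Rightarrow> real^3 \<Rightarrow> real" where
  "partial i f x = deriv (\<lambda>t. f (x + t *\<^sub>R axis i 1)) 0"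

definition dirderiv :: "real^3 \<Rightarrow> (real^3 \<Rightarrow> real) \<Rightarrow> real^3 \<Rightarrow> real" where
  "dirderiv u f x = (\<Sum>i\<in>UNIV. u$i * partial i f x)"

definition dunkl :: "real \<Rightarrow> 3 \<Rightarrow> (real^3 \<Rightarrow> real) \<Rightarrow> real^3 \<Rightarrow> real" where
  "dunkl \<kappa> i f x = partial i f x
     + \<kappa> * (\<Sum>v\<in>Rplus. (f x - f (refl v x)) / (x \<bullet> v) * v$i)"

definition dunkl_dir :: "real \<Rightarrow> real^3 \<Rightarrow> (real^3 \<Rightarrow> real) \<Rightarrow> real^3 \<Rightarrow> real" where
  "dunkl_dir \<kappa> u f x = (\<Sum>i\<in>UNIV. u$i * dunkl \<kappa> i f x)"

definition intertwining :: "real \<Rightarrow> ((real^3 \<Rightarrow> real) \<Rightarrow> (real^3 \<Rightarrow> real)) \<Rightarrow> bool" where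
  "intertwining \<kappa> V \<longleftrightarrow>
     (\<forall>p q a b. poly3 p \<longrightarrow> poly3 q \<longrightarrow>
         V (\<lambda>x. a * p x + b * q x) = (\<lambda>x. a * V p x + b * V q x))
   \<and> V (\<lambda>x. 1) = (\<lambda>x. 1)
   \<and> (\<forall>n p. homog3 n p \<longrightarrow> homog3 n (V p))
   \<and> (\<forall>u p x. poly3 p \<longrightarrow> (\<forall>v\<in>Rplus. x \<bullet> v \<noteq> 0) \<longrightarrow>
         dunkl_dir \<kappa> u (V p) x = V (dirderiv u p) x)"

definition genfun :: "real \<Rightarrow> real^3 \<Rightarrow> real^3 \<Rightarrow> real \<Rightarrow> real" where
  "genfun \<kappa> x y0 r = inverse (1 - r * (x \<bullet> y0))
      * (\<Prod>y\<in>Icos. (1 - r * (x \<bullet> y)) powr (- \<kappa>))"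

definition qn :: "real \<Rightarrow> nat \<Rightarrow> real^3 \<Rightarrow> real^3 \<Rightarrow> real" where
  "qn \<kappa> n x y0 = (deriv ^^ n) (genfun \<kappa> x y0) 0 / fact n"

definition nu :: "real \<Rightarrow> nat \<Rightarrow> real" where
  "nu \<kappa> n = 2 ^ n * pochhammer (6 * \<kappa> + 1) (n div 2)
                   * pochhammer (5 * \<kappa> + 1/2) ((n + 1) div 2)"

end

(*
  Let P n = V ((x \<bullet> y0) ^ n).  The intertwining property in direction x, evaluated at x,
  together with Euler's identity gives the recursion
    (n+1) P (n+1) x + \<kappa> \<Sum>v\<in>R+. (P (n+1) x - P (n+1) (x \<sigma>v)) = (n+1) (x \<bullet> y0) P n x,
  first off the mirrors and then everywhere by continuity.  The functions n!/\<nu>(n) q n (x; y0)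
  satisfy the same recursion.  This is read off from the generating function, using that the
  15 reflections fix y0 five times and send it once to every point of I other than \<plusminus>y0, and
  that q n (x; -y) = (-1)^n q n (x; y); the factor n+1 + (11 + (-1)^(n+1)) \<kappa> that appears is
  \<nu>(n+1)/\<nu>(n).  Finally, the left-hand side of the recursion is injective on continuous functions
  by a maximum principle: at a maximum of f on a ball, which the reflections preserve, every
  difference f x - f (x \<sigma>v) is nonnegative.
*)
theory Submission
  imports Defs
begin

lemma tau_sq: "tau * tau = tau + 1"
  unfolding tau_def by (simp add: field_simps)

lemma tau_sq_left: "tau * (tau * x) = (tau + 1) * x"
  by (metis mult.assoc tau_sq)

lemma tau_gt_1: "tau > 1"
  unfolding tau_def by simp

lemma inverse_tau: "inverse tau = tau - 1"
proof -
  have "tau \<noteq> 0" unfolding tau_def by (simp add: add_nonneg_eq_0_iff)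
  then show ?thesis using tau_sq by (simp add: field_simps)
qed

lemma vec3_nth [simp]: "vec3 a b c $ 1 = a" "vec3 a b c $ 2 = b" "vec3 a b c $ 3 = c"
  unfolding vec3_def by simp_all

lemma vec3_eq_iff: "vec3 a b c = vec3 d e f \<longleftrightarrow> a = d \<and> b = e \<and> c = f"
  by (auto simp: vec_eq_iff forall_3)

lemma inner_vec3: "vec3 a b c \<bullet> vec3 d e f = a * d + b * e + c * f"
  by (simp add: inner_vec_def sum_3)

lemma vec3_arith:
  "vec3 a b c - vec3 d e f = vec3 (a - d) (b - e) (c - f)"
  "r *\<^sub>R vec3 a b c = vec3 (r * a) (r * b) (r * c)"
  "- vec3 a b c = vec3 (- a) (- b) (- c)"
  by (simp_all add: vec_eq_iff forall_3)

lemma refl_inner_commute: "refl v x \<bullet> y = x \<bullet> refl v y"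
  by (simp add: refl_def inner_diff_left inner_diff_right inner_commute algebra_simps)

lemma refl_refl: "v \<noteq> 0 \<Longrightarrow> refl v (refl v x) = x"
  by (simp add: refl_def inner_diff_left power2_norm_eq_inner algebra_simps)

lemma norm_refl: "v \<noteq> 0 \<Longrightarrow> norm (refl v x) = norm x"
  by (simp add: norm_eq_sqrt_inner refl_inner_commute refl_refl)

lemma continuous_on_refl: "continuous_on UNIV (refl v)"
proof -
  have "refl v = (\<lambda>x. x - ((x \<bullet> v) * (2 / (norm v)\<^sup>2)) *\<^sub>R v)"
    by (simp add: refl_def fun_eq_iff)
  then show ?thesis by (simp only:) (intro continuous_intros)
qed

section \<open>The icosahedral vectors and the positive roots\<close>

lemma sum_set_distinct_nth: "distinct xs \<Longrightarrow> (\<Sum>v\<in>set xs. f v) = (\<Sum>i<length xs. f (xs ! i))"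
  by (simp add: sum.distinct_set_conv_list sum_list_sum_nth atLeast0LessThan)

definition Ilist :: "(real^3) list" where
  "Ilist = [vec3 0 tau 1, vec3 0 tau (-1), vec3 1 0 tau, vec3 (-1) 0 tau, vec3 tau 1 0, vec3 tau (-1) 0,
            vec3 (-tau) 1 0, vec3 (-tau) (-1) 0, vec3 1 0 (-tau), vec3 (-1) 0 (-tau),
            vec3 0 (-tau) 1, vec3 0 (-tau) (-1)]"

definition Rlist :: "(real^3) list" where
  "Rlist = [vec3 2 0 0, vec3 0 2 0, vec3 0 0 2,
     vec3 tau (1 - tau) (-1), vec3 tau (1 - tau) 1, vec3 tau (tau - 1) (-1), vec3 tau (tau - 1) 1,
     vec3 (-1) tau (1 - tau), vec3 (-1) tau (tau - 1), vec3 1 tau (1 - tau), vec3 1 tau (tau - 1),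
     vec3 (tau - 1) (-1) tau, vec3 (tau - 1) 1 tau, vec3 (1 - tau) 1 tau, vec3 (tau - 1) 1 (-tau)]"

definition refl_index :: "nat list list" where
  "refl_index =
    [[0, 10, 1, 4, 0, 0, 6, 2, 5, 3, 7, 0, 9, 8, 0],
     [1, 11, 0, 1, 4, 6, 1, 5, 8, 7, 9, 2, 1, 1, 3],
     [3, 2, 8, 2, 6, 2, 7, 0, 2, 2, 10, 1, 11, 5, 4],
     [2, 3, 9, 5, 3, 4, 3, 3, 10, 0, 3, 6, 7, 11, 1],
     [6, 5, 4, 0, 1, 3, 9, 4, 4, 10, 11, 4, 8, 4, 2],
     [7, 4, 5, 3, 9, 10, 11, 1, 0, 5, 5, 8, 5, 2, 5],
     [4, 7, 6, 8, 2, 1, 0, 10, 11, 6, 6, 3, 6, 9, 6],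
     [5, 6, 7, 11, 10, 8, 2, 7, 7, 1, 0, 7, 3, 7, 9],
     [9, 8, 2, 6, 8, 7, 8, 8, 1, 11, 8, 5, 4, 0, 10],
     [8, 9, 3, 9, 5, 9, 4, 11, 9, 9, 1, 10, 0, 6, 7],
     [10, 0, 11, 10, 7, 5, 10, 6, 3, 4, 2, 9, 10, 10, 8],
     [11, 1, 10, 7, 11, 11, 5, 9, 6, 8, 4, 11, 2, 3, 11]]"

lemma Collect_sign_pairs: "{f s t |s t. s \<in> {-1, 1::real} \<and> t \<in> {-1, 1::real}} = {f (-1) (-1), f (-1) 1, f 1 (-1), f 1 1}"
  by auto

lemma Collect_signs: "{f s |s. s \<in> {-1, 1::real}} = {f (-1), f 1}"
  by auto

lemma Icos_eq_set_Ilist: "Icos = set Ilist"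
  unfolding Icos_def Ilist_def Collect_sign_pairs by auto

lemma Rplus_eq_set_Rlist: "Rplus = set Rlist"
  unfolding Rplus_def Rlist_def Collect_sign_pairs Collect_signs inverse_tau by auto

lemma distinct_Ilist: "distinct Ilist"
  using tau_gt_1 unfolding Ilist_def by (simp add: vec3_eq_iff)

lemma distinct_Rlist: "distinct Rlist"
  using tau_gt_1 unfolding Rlist_def by (simp add: vec3_eq_iff)

lemma length_Ilist: "length Ilist = 12" and length_Rlist: "length Rlist = 15"
  by (simp_all add: Ilist_def Rlist_def)

lemma refl_Ilist:
  assumes "i < 15" "j < 12"
  shows "refl (Rlist ! i) (Ilist ! j) = Ilist ! (refl_index ! j ! i)"
proof -
  have "i \<in> {..<15}" "j \<in> {..<12}"
    using assms by simp_all
  then show ?thesis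
    by (simp add: lessThan_nat_numeral, elim disjE)
       (simp_all add: Rlist_def Ilist_def refl_index_def refl_def power2_norm_eq_inner vec3_arith inner_vec3
          vec3_eq_iff field_simps tau_sq tau_sq_left)
qed

lemma refl_index_less:
  assumes "i < 15" "j < 12" shows "refl_index ! j ! i < 12"
proof -
  have "i \<in> {..<15}" "j \<in> {..<12}"
    using assms by simp_all
  then show ?thesis
    by (simp add: lessThan_nat_numeral, elim disjE) (simp_all add: refl_index_def)
qed

lemma uminus_Ilist:
  assumes "j < 12" shows "- (Ilist ! j) = Ilist ! (11 - j)"
proof -
  have "j \<in> {..<12}"
    using assms by simp
  then show ?thesis
    by (simp add: lessThan_nat_numeral, elim disjE) (simp_all add: Ilist_def vec3_arith)
qed

lemma sum_refl_index:
  fixes g :: "nat \<Rightarrow> real"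
  assumes "j < 12"
  shows "(\<Sum>i<15. g (refl_index ! j ! i)) = (\<Sum>k<12. g k) + 4 * g j - g (11 - j)"
proof -
  have "j \<in> {..<12}" using assms by simp
  then show ?thesis
    by (simp add: lessThan_nat_numeral) (elim disjE; simp add: lessThan_nat_numeral refl_index_def)
qed

lemma Icos_nth_cases:
  assumes "y \<in> Icos" obtains j where "j < 12" "y = Ilist ! j"
  using assms by (auto simp: Icos_eq_set_Ilist in_set_conv_nth length_Ilist)

lemma refl_mem_Icos:
  assumes "v \<in> Rplus" "y \<in> Icos" shows "refl v y \<in> Icos"
proof -
  obtain i where "i < 15" "v = Rlist ! i"
    using assms(1) by (auto simp: Rplus_eq_set_Rlist in_set_conv_nth length_Rlist)
  moreover obtain j where "j < 12" "y = Ilist ! j"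
    using assms(2) by (rule Icos_nth_cases)
  ultimately show ?thesis
    by (simp add: refl_Ilist refl_index_less Icos_eq_set_Ilist length_Ilist)
qed

lemma uminus_mem_Icos:
  assumes "y \<in> Icos" shows "- y \<in> Icos"
proof -
  obtain j where "j < 12" "y = Ilist ! j"
    using assms by (rule Icos_nth_cases)
  then show ?thesis
    by (simp add: uminus_Ilist Icos_eq_set_Ilist length_Ilist)
qed

lemma sum_refl_Icos:
  fixes h :: "real^3 \<Rightarrow> real"
  assumes "y0 \<in> Icos"
  shows "(\<Sum>v\<in>Rplus. h (refl v y0)) = (\<Sum>y\<in>Icos. h y) + 4 * h y0 - h (- y0)"
proof -
  obtain j where j: "j < 12" "y0 = Ilist ! j" using assms by (rule Icos_nth_cases)
  have "(\<Sum>v\<in>Rplus. h (refl v y0)) = (\<Sum>i<15. h (Ilist ! (refl_index ! j ! i)))"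
    using j by (simp add: Rplus_eq_set_Rlist sum_set_distinct_nth distinct_Rlist length_Rlist refl_Ilist)
  also have "\<dots> = (\<Sum>k<12. h (Ilist ! k)) + 4 * h (Ilist ! j) - h (Ilist ! (11 - j))"
    by (rule sum_refl_index[OF j(1)])
  also have "\<dots> = (\<Sum>y\<in>Icos. h y) + 4 * h y0 - h (- y0)"
    using j by (simp add: Icos_eq_set_Ilist sum_set_distinct_nth distinct_Ilist length_Ilist uminus_Ilist)
  finally show ?thesis .
qed

lemma zero_notin_Rplus: "0 \<notin> Rplus"
  using tau_gt_1 by (auto simp: Rplus_eq_set_Rlist Rlist_def vec_eq_iff forall_3)

lemma finite_Rplus: "finite Rplus"
  by (simp add: Rplus_eq_set_Rlist)

lemma card_Rplus: "card Rplus = 15"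
  by (simp add: Rplus_eq_set_Rlist distinct_card distinct_Rlist length_Rlist)

lemma finite_Icos: "finite Icos"
  by (simp add: Icos_eq_set_Ilist)

lemma card_Icos: "card Icos = 12"
  by (simp add: Icos_eq_set_Ilist distinct_card distinct_Ilist length_Ilist)

lemma bij_betw_refl_Icos:
  assumes "v \<in> Rplus" shows "bij_betw (refl v) Icos Icos"
proof -
  have "v \<noteq> 0" using assms zero_notin_Rplus by blast
  with assms show ?thesis
    by (intro bij_betw_byWitness[where f' = "refl v"]) (auto simp: refl_refl refl_mem_Icos)
qed

lemma bij_betw_uminus_Icos: "bij_betw uminus Icos Icos"
  by (intro bij_betw_byWitness[where f' = uminus]) (auto simp: uminus_mem_Icos)

section \<open>Homogeneous polynomials\<close>

lemma homog3_poly3: "homog3 n p \<Longrightarrow> poly3 p"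
  unfolding homog3_def poly3_def by blast

lemma homog3_scaleR_arg:
  assumes "homog3 n p" shows "p (c *\<^sub>R x) = c ^ n * p x"
proof -
  obtain S d where S: "\<forall>(i, j, k)\<in>S. i + j + k = n" "p = (\<lambda>x. \<Sum>a\<in>S. d a * mono3 a x)"
    using assms unfolding homog3_def by blast
  have "mono3 a (c *\<^sub>R x) = c ^ n * mono3 a x" if "a \<in> S" for a
    using S(1) that by (auto simp: mono3_def power_mult_distrib power_add)
  then show ?thesis unfolding S(2) by (simp add: sum_distrib_left algebra_simps)
qed

lemma homog3_const: "homog3 0 (\<lambda>x. c)"
  unfolding homog3_def by (intro exI[of _ "{(0, 0, 0)}"] exI[of _ "\<lambda>_. c"]) (simp add: mono3_def)

lemma homog3_add:
  assumes "homog3 n p" "homog3 n q" shows "homog3 n (\<lambda>x. p x + q x)"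
proof -
  obtain S c where S: "finite S" "\<forall>(i, j, k)\<in>S. i + j + k = n" "p = (\<lambda>x. \<Sum>a\<in>S. c a * mono3 a x)"
    using assms(1) unfolding homog3_def by blast
  obtain T d where T: "finite T" "\<forall>(i, j, k)\<in>T. i + j + k = n" "q = (\<lambda>x. \<Sum>a\<in>T. d a * mono3 a x)"
    using assms(2) unfolding homog3_def by blast
  define e where "e a = (if a \<in> S then c a else 0) + (if a \<in> T then d a else 0)" for a
  have "(\<Sum>a\<in>S \<union> T. e a * mono3 a x) = p x + q x" for x
  proof -
    have "e a * mono3 a x = (if a \<in> S then c a * mono3 a x else 0) + (if a \<in> T then d a * mono3 a x else 0)" for a
      unfolding e_def by (simp add: algebra_simps)
    then have "(\<Sum>a\<in>S \<union> T. e a * mono3 a x) =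
        (\<Sum>a\<in>S \<union> T. if a \<in> S then c a * mono3 a x else 0) + (\<Sum>a\<in>S \<union> T. if a \<in> T then d a * mono3 a x else 0)"
      by (simp add: sum.distrib)
    also have "\<dots> = p x + q x"
      using S T by (simp add: sum.If_cases Int_absorb1)
    finally show ?thesis .
  qed
  with S T show ?thesis unfolding homog3_def
    by (intro exI[of _ "S \<union> T"] exI[of _ e]) auto
qed

lemma homog3_cmult:
  assumes "homog3 n p" shows "homog3 n (\<lambda>x. r * p x)"
proof -
  obtain S c where S: "finite S" "\<forall>(i, j, k)\<in>S. i + j + k = n" "p = (\<lambda>x. \<Sum>a\<in>S. c a * mono3 a x)"
    using assms unfolding homog3_def by blast
  then show ?thesis unfolding homog3_def
    by (intro exI[of _ S] exI[of _ "\<lambda>a. r * c a"]) (auto simp: sum_distrib_left algebra_simps)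
qed

lemma homog3_mult_coord:
  assumes "homog3 n p" shows "homog3 (Suc n) (\<lambda>x. x $ l * p x)"
proof -
  obtain S c where S: "finite S" "\<forall>(i, j, k)\<in>S. i + j + k = n" "p = (\<lambda>x. \<Sum>a\<in>S. c a * mono3 a x)"
    using assms unfolding homog3_def by blast
  define sh :: "nat \<times> nat \<times> nat \<Rightarrow> nat \<times> nat \<times> nat" where
    "sh = (\<lambda>(i, j, k). if l = 1 then (Suc i, j, k) else if l = 2 then (i, Suc j, k) else (i, j, Suc k))"
  have inj: "inj sh"
    unfolding sh_def inj_def by auto
  have mono_sh: "mono3 (sh a) x = x $ l * mono3 a x" for a x
    using exhaust_3[of l] by (auto simp: sh_def mono3_def split: prod.splits)
  have "x $ l * p x = (\<Sum>b\<in>sh ` S. c (inv sh b) * mono3 b x)" for x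
    unfolding S(3) sum.reindex[OF inj_on_subset[OF inj subset_UNIV]]
    by (simp add: inv_f_f[OF inj] mono_sh sum_distrib_left algebra_simps)
  moreover have "\<forall>(i, j, k)\<in>sh ` S. i + j + k = Suc n"
    using S(2) unfolding sh_def by (auto split: if_splits)
  ultimately show ?thesis unfolding homog3_def using S(1)
    by (intro exI[of _ "sh ` S"] exI[of _ "\<lambda>b. c (inv sh b)"]) auto
qed

lemma homog3_mult_inner:
  assumes "homog3 n p" shows "homog3 (Suc n) (\<lambda>x. (x \<bullet> y) * p x)"
proof -
  have "(\<lambda>x. (x \<bullet> y) * p x) = (\<lambda>x. (y $ 1 * (x $ 1 * p x) + y $ 2 * (x $ 2 * p x)) + y $ 3 * (x $ 3 * p x))"
    by (auto simp: inner_vec_def sum_3 algebra_simps)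
  then show ?thesis
    by (simp only:) (intro homog3_add homog3_cmult homog3_mult_coord assms)
qed

lemma homog3_inner_power: "homog3 n (\<lambda>x. (x \<bullet> y) ^ n)"
  by (induction n) (simp_all add: homog3_const homog3_mult_inner)

lemma poly3_differentiable: "poly3 p \<Longrightarrow> p differentiable (at x)"
  unfolding poly3_def mono3_def
  by (auto intro!: derivative_intros bounded_linear_imp_differentiable[OF bounded_linear_vec_nth]
           split: prod.splits)

lemma poly3_continuous_on: "poly3 p \<Longrightarrow> continuous_on UNIV p"
  unfolding poly3_def mono3_def
  by (auto intro!: continuous_intros linear_continuous_on[OF bounded_linear_vec_nth] split: prod.splits)

lemma has_derivative_along_line:
  assumes "(p has_derivative D) (at x)"
  shows "((\<lambda>t. p (x + t *\<^sub>R e)) has_real_derivative D e) (at 0)"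
proof -
  have "((\<lambda>t::real. x + t *\<^sub>R e) has_derivative (\<lambda>t. t *\<^sub>R e)) (at 0)"
    by (auto intro!: derivative_eq_intros)
  with assms have "((\<lambda>t. p (x + t *\<^sub>R e)) has_derivative (\<lambda>t. D (t *\<^sub>R e))) (at 0)"
    using has_derivative_compose[of "\<lambda>t. x + t *\<^sub>R e"] by fastforce
  moreover have "D (t *\<^sub>R e) = t * D e" for t
    using assms by (simp add: has_derivative_def linear_scale bounded_linear.linear)
  ultimately show ?thesis
    by (simp add: has_field_derivative_def mult_commute_abs)
qed

lemma dirderiv_eq_derivative:
  assumes "(p has_derivative D) (at x)"
  shows "dirderiv u p x = D u"
proof -
  have "partial i p x = D (axis i 1)" for i
    unfolding partial_def by (rule DERIV_imp_deriv[OF has_derivative_along_line[OF assms]])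
  then have "dirderiv u p x = (\<Sum>i\<in>UNIV. u $ i * D (axis i 1))"
    by (simp add: dirderiv_def)
  also have "\<dots> = D (\<Sum>i\<in>UNIV. u $ i *\<^sub>R axis i 1)"
    using assms unfolding has_derivative_def by (simp add: linear_sum linear_scale bounded_linear.linear)
  also have "(\<Sum>i\<in>UNIV. u $ i *\<^sub>R axis i 1) = u"
    by (simp add: sum_3 vec_eq_iff forall_3 axis_def)
  finally show ?thesis .
qed

lemma dirderiv_self_homog3:
  assumes "homog3 n p" shows "dirderiv x p x = real n * p x"
proof -
  obtain D where D: "(p has_derivative D) (at x)"
    using poly3_differentiable[OF homog3_poly3[OF assms]] unfolding differentiable_def by blast
  have "p (x + t *\<^sub>R x) = (1 + t) ^ n * p x" for t
    using homog3_scaleR_arg[OF assms, of "1 + t" x] by (simp add: algebra_simps)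
  then have "((\<lambda>t. p (x + t *\<^sub>R x)) has_real_derivative real n * p x) (at 0)"
    by (auto intro!: derivative_eq_intros)
  with has_derivative_along_line[OF D] have "D x = real n * p x"
    by (rule DERIV_unique)
  with D show ?thesis by (simp add: dirderiv_eq_derivative)
qed

lemma dirderiv_inner_power:
  "dirderiv u (\<lambda>z. (z \<bullet> y) ^ Suc m) x = real (Suc m) * (u \<bullet> y) * (x \<bullet> y) ^ m"
proof -
  have "((\<lambda>z. (z \<bullet> y) ^ Suc m) has_derivative (\<lambda>h. real (Suc m) * (x \<bullet> y) ^ m * (h \<bullet> y))) (at x)"
    using has_derivative_power[OF bounded_linear_imp_has_derivative[OF bounded_linear_inner_left],
        where n = "Suc m" and x = x and S = UNIV]
    by (simp add: algebra_simps)
  then show ?thesis by (simp add: dirderiv_eq_derivative algebra_simps)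
qed

section \<open>The Dunkl--Euler operator\<close>

(* Unlike dunkl_dir it needs no division by x \<bullet> v, so identities for it extend to the mirrors by continuity. *)
definition dunkl_euler :: "(real^3) set \<Rightarrow> real \<Rightarrow> real \<Rightarrow> (real^3 \<Rightarrow> real) \<Rightarrow> real^3 \<Rightarrow> real" where
  "dunkl_euler R \<kappa> c f x = c * f x + \<kappa> * (\<Sum>v\<in>R. f x - f (refl v x))"

lemma dunkl_dir_self:
  assumes "\<forall>v\<in>Rplus. x \<bullet> v \<noteq> 0"
  shows "dunkl_dir \<kappa> x f x = dirderiv x f x + \<kappa> * (\<Sum>v\<in>Rplus. f x - f (refl v x))"
proof -
  define d where "d v = (f x - f (refl v x)) / (x \<bullet> v)" for v
  have "dunkl_dir \<kappa> x f x = dirderiv x f x + \<kappa> * (\<Sum>v\<in>Rplus. d v * (x $ 1 * v $ 1 + x $ 2 * v $ 2 + x $ 3 * v $ 3))"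
    unfolding dunkl_dir_def dunkl_def dirderiv_def d_def
    by (simp add: sum_3 algebra_simps sum_distrib_left sum.distrib)
  moreover have "x $ 1 * v $ 1 + x $ 2 * v $ 2 + x $ 3 * v $ 3 = x \<bullet> v" for v
    by (simp add: inner_vec_def sum_3)
  ultimately show ?thesis
    using assms by (simp add: d_def)
qed

lemma dunkl_dir_self_homog3:
  assumes "homog3 n p" "\<forall>v\<in>Rplus. x \<bullet> v \<noteq> 0"
  shows "dunkl_dir \<kappa> x p x = dunkl_euler Rplus \<kappa> n p x"
  using assms by (simp add: dunkl_dir_self dirderiv_self_homog3 dunkl_euler_def)

lemma dunkl_euler_diff:
  "dunkl_euler R \<kappa> c (\<lambda>x. f x - g x) x = dunkl_euler R \<kappa> c f x - dunkl_euler R \<kappa> c g x"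
proof -
  have sum_diff: "(\<Sum>v\<in>R. f x - g x - (f (refl v x) - g (refl v x)))
      = (\<Sum>v\<in>R. f x - f (refl v x)) - (\<Sum>v\<in>R. g x - g (refl v x))"
    unfolding sum_subtractf[symmetric] by (rule sum.cong) simp_all
  show ?thesis
    unfolding dunkl_euler_def sum_diff by (simp add: algebra_simps)
qed

lemma dunkl_euler_cmult:
  "dunkl_euler R \<kappa> c (\<lambda>x. a * f x) x = a * dunkl_euler R \<kappa> c f x"
  by (simp add: dunkl_euler_def sum_distrib_left algebra_simps)

lemma continuous_on_dunkl_euler:
  "continuous_on UNIV f \<Longrightarrow> continuous_on UNIV (dunkl_euler R \<kappa> c f)"
  unfolding dunkl_euler_def[abs_def]
  by (intro continuous_intros continuous_on_compose2[OF _ continuous_on_refl]) auto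

lemma continuous_eq_off_hyperplanes:
  fixes f g :: "'a::euclidean_space \<Rightarrow> real"
  assumes "finite R" "0 \<notin> R" "continuous_on UNIV f" "continuous_on UNIV g"
    and "\<And>x. \<forall>v\<in>R. x \<bullet> v \<noteq> 0 \<Longrightarrow> f x = g x"
  shows "f = g"
proof -
  define H where "H = (\<Union>v\<in>R. {x. v \<bullet> x = 0})"
  have "negligible {x. v \<bullet> x = 0}" if "v \<in> R" for v
    using that assms(2) by (intro negligible_hyperplane) auto
  with assms(1) have "negligible H"
    unfolding H_def by (intro negligible_Union) auto
  then have "interior H = {}"
    using open_not_negligible[OF open_interior] negligible_subset[OF _ interior_subset] by blast
  then have closure_UNIV: "closure (- H) = UNIV"
    unfolding closure_complement by simp
  have "f x - g x = 0" if "x \<in> - H" for x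
    using that assms(5)[of x] by (simp add: H_def inner_commute[of x])
  moreover have "continuous_on (closure (- H)) (\<lambda>x. f x - g x)"
    unfolding closure_UNIV using assms(3,4) by (rule continuous_on_diff)
  ultimately have "f x - g x = 0" for x
    using continuous_constant_on_closure[of "- H" "\<lambda>x. f x - g x" 0 x] closure_UNIV by blast
  then show ?thesis by auto
qed

lemma dunkl_euler_max_principle:
  assumes "finite R" "0 \<notin> R" "c > 0" "\<kappa> \<ge> 0" "continuous_on UNIV f"
    and "\<And>x. dunkl_euler R \<kappa> c f x \<le> 0"
  shows "f x \<le> 0"
proof -
  define K where "K = cball (0::real^3) (norm x)"
  have "x \<in> K" by (simp add: K_def)
  then obtain x0 where x0: "x0 \<in> K" and x0_max: "\<And>y. y \<in> K \<Longrightarrow> f y \<le> f x0"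
    using continuous_attains_sup[OF compact_cball _ continuous_on_subset[OF assms(5)], of 0 "norm x"]
    unfolding K_def by blast
  have "f (refl v x0) \<le> f x0" if "v \<in> R" for v
  proof (rule x0_max)
    have "v \<noteq> 0" using that assms(2) by blast
    with x0 show "refl v x0 \<in> K" by (simp add: K_def norm_refl)
  qed
  then have "\<kappa> * (\<Sum>v\<in>R. f x0 - f (refl v x0)) \<ge> 0"
    using assms(4) by (simp add: sum_nonneg)
  with assms(6)[of x0] have "c * f x0 \<le> 0"
    by (simp add: dunkl_euler_def)
  with assms(3) have "f x0 \<le> 0"
    by (simp add: mult_le_0_iff)
  with x0_max[OF \<open>x \<in> K\<close>] show ?thesis by simp
qed

lemma dunkl_euler_unique:
  assumes "finite R" "0 \<notin> R" "c > 0" "\<kappa> \<ge> 0" "continuous_on UNIV f" "continuous_on UNIV g"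
    and "\<And>x. dunkl_euler R \<kappa> c f x = dunkl_euler R \<kappa> c g x"
  shows "f = g"
proof
  fix x
  have "f x - g x \<le> 0"
    by (rule dunkl_euler_max_principle[OF assms(1-4) continuous_on_diff[OF assms(5,6)]])
       (simp add: dunkl_euler_diff assms(7))
  moreover have "g x - f x \<le> 0"
    by (rule dunkl_euler_max_principle[OF assms(1-4) continuous_on_diff[OF assms(6,5)]])
       (simp add: dunkl_euler_diff assms(7))
  ultimately show "f x = g x" by simp
qed

lemma intertwining_homog3_inner_power: "intertwining \<kappa> V \<Longrightarrow> homog3 n (V (\<lambda>x. (x \<bullet> y) ^ n))"
  unfolding intertwining_def using homog3_inner_power by blast

lemma intertwining_inner_power_dunkl_euler:
  assumes V: "intertwining \<kappa> V"
  shows "dunkl_euler Rplus \<kappa> (Suc m) (V (\<lambda>x. (x \<bullet> y) ^ Suc m)) x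
     = real (Suc m) * (x \<bullet> y) * V (\<lambda>x. (x \<bullet> y) ^ m) x"
proof -
  have lin: "V (\<lambda>x. a * p x + b * q x) = (\<lambda>x. a * V p x + b * V q x)"
    if "poly3 p" "poly3 q" for p q a b
    using V that unfolding intertwining_def by blast
  have scale: "V (\<lambda>x. a * p x) = (\<lambda>x. a * V p x)" if "poly3 p" for p a
    using lin[OF that that, of a 0] by simp
  have dunkl: "dunkl_dir \<kappa> u (V p) x = V (dirderiv u p) x"
    if "poly3 p" "\<forall>v\<in>Rplus. x \<bullet> v \<noteq> 0" for u p x
    using V that unfolding intertwining_def by blast
  have poly: "poly3 (\<lambda>x. (x \<bullet> y) ^ n)" for n
    by (rule homog3_poly3[OF homog3_inner_power])
  have cont: "continuous_on UNIV (V (\<lambda>x. (x \<bullet> y) ^ n))" for n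
    by (rule poly3_continuous_on[OF homog3_poly3[OF intertwining_homog3_inner_power[OF V]]])
  have "dunkl_euler Rplus \<kappa> (Suc m) (V (\<lambda>x. (x \<bullet> y) ^ Suc m))
     = (\<lambda>x. real (Suc m) * (x \<bullet> y) * V (\<lambda>x. (x \<bullet> y) ^ m) x)"
  proof (rule continuous_eq_off_hyperplanes[OF finite_Rplus zero_notin_Rplus])
    show "continuous_on UNIV (dunkl_euler Rplus \<kappa> (Suc m) (V (\<lambda>x. (x \<bullet> y) ^ Suc m)))"
      by (rule continuous_on_dunkl_euler[OF cont])
    show "continuous_on UNIV (\<lambda>x. real (Suc m) * (x \<bullet> y) * V (\<lambda>x. (x \<bullet> y) ^ m) x)"
      using cont[of m] by (intro continuous_intros)
  next
    fix x assume generic: "\<forall>v\<in>Rplus. x \<bullet> v \<noteq> 0"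
    have "dunkl_euler Rplus \<kappa> (Suc m) (V (\<lambda>x. (x \<bullet> y) ^ Suc m)) x
        = dunkl_dir \<kappa> x (V (\<lambda>x. (x \<bullet> y) ^ Suc m)) x"
      by (rule dunkl_dir_self_homog3[OF intertwining_homog3_inner_power[OF V] generic, symmetric])
    also have "\<dots> = V (dirderiv x (\<lambda>z. (z \<bullet> y) ^ Suc m)) x"
      by (rule dunkl[OF poly generic])
    also have "dirderiv x (\<lambda>z. (z \<bullet> y) ^ Suc m) = (\<lambda>z. (real (Suc m) * (x \<bullet> y)) * (z \<bullet> y) ^ m)"
      by (intro ext) (rule dirderiv_inner_power)
    also have "V \<dots> x = real (Suc m) * (x \<bullet> y) * V (\<lambda>x. (x \<bullet> y) ^ m) x"
      by (simp only: scale[OF poly])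
    finally show "dunkl_euler Rplus \<kappa> (Suc m) (V (\<lambda>x. (x \<bullet> y) ^ Suc m)) x
        = real (Suc m) * (x \<bullet> y) * V (\<lambda>x. (x \<bullet> y) ^ m) x" .
  qed
  then show ?thesis by (simp add: fun_eq_iff)
qed

section \<open>The generating function\<close>

definition binomial_fps :: "real \<Rightarrow> real \<Rightarrow> real fps" where
  "binomial_fps \<kappa> a = Abs_fps (\<lambda>n. pochhammer \<kappa> n * a ^ n / fact n)"

definition icos_fps :: "real \<Rightarrow> real^3 \<Rightarrow> real fps" where
  "icos_fps \<kappa> x = (\<Prod>z\<in>Icos. binomial_fps \<kappa> (x \<bullet> z))"

definition genfun_fps :: "real \<Rightarrow> real^3 \<Rightarrow> real^3 \<Rightarrow> real fps" where
  "genfun_fps \<kappa> x y = inverse (1 - fps_const (x \<bullet> y) * fps_X) * icos_fps \<kappa> x"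

lemma has_fps_expansion_binomial_fps:
  "(\<lambda>r. (1 - r * a) powr (- \<kappa>)) has_fps_expansion binomial_fps \<kappa> a"
proof (rule has_fps_expansionI)
  have "open {r::real. \<bar>r * a\<bar> < 1}"
    by (intro open_Collect_less continuous_intros)
  then have "eventually (\<lambda>r. \<bar>r * a\<bar> < 1) (nhds (0::real))"
    unfolding eventually_nhds by force
  then show "eventually (\<lambda>r. (\<lambda>n. fps_nth (binomial_fps \<kappa> a) n * r ^ n) sums (1 - r * a) powr (- \<kappa>)) (nhds 0)"
  proof (rule eventually_mono)
    fix r :: real assume "\<bar>r * a\<bar> < 1"
    then have "(\<lambda>n. (- \<kappa> gchoose n) * (- (r * a)) ^ n) sums (1 + - (r * a)) powr (- \<kappa>)"
      by (intro gen_binomial_real) simp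
    moreover have "(- \<kappa> gchoose n) * (- (r * a)) ^ n = fps_nth (binomial_fps \<kappa> a) n * r ^ n" for n
    proof -
      have "(- \<kappa> gchoose n) * (- (r * a)) ^ n = ((-1) ^ n * (-1) ^ n) * pochhammer \<kappa> n / fact n * (r * a) ^ n"
        by (simp add: gbinomial_pochhammer power_minus[of "r * a"])
      also have "(-1::real) ^ n * (-1) ^ n = 1"
        by (simp flip: power_mult_distrib)
      finally show ?thesis by (simp add: binomial_fps_def power_mult_distrib)
    qed
    ultimately show "(\<lambda>n. fps_nth (binomial_fps \<kappa> a) n * r ^ n) sums (1 - r * a) powr (- \<kappa>)"
      by simp
  qed
qed

lemma has_fps_expansion_genfun: "genfun \<kappa> x y has_fps_expansion genfun_fps \<kappa> x y"
proof -
  have "(\<lambda>r. 1 - r * a) has_fps_expansion 1 - fps_X * fps_const a" for a :: real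
    by (intro has_fps_expansion_diff has_fps_expansion_1 has_fps_expansion_cmult_right has_fps_expansion_fps_X)
  then have "(\<lambda>r. 1 - r * a) has_fps_expansion 1 - fps_const a * fps_X" for a :: real
    by (simp add: mult.commute[of fps_X])
  then show ?thesis
    unfolding genfun_def[abs_def] genfun_fps_def icos_fps_def
    by (intro has_fps_expansion_mult has_fps_expansion_inverse has_fps_expansion_prod
        has_fps_expansion_binomial_fps) simp_all
qed

lemma higher_deriv_0_eq_fps_nth:
  fixes f :: "real \<Rightarrow> real"
  assumes "f has_fps_expansion F"
  shows "(deriv ^^ n) f 0 = fact n * fps_nth F n"
proof -
  have "(deriv ^^ n) f has_fps_expansion (fps_deriv ^^ n) F"
    by (induction n) (auto intro: has_fps_expansion_deriv assms)
  then have "(deriv ^^ n) f 0 = eval_fps ((fps_deriv ^^ n) F) 0"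
    unfolding has_fps_expansion_def by (auto dest: eventually_nhds_x_imp_x)
  then show ?thesis by (simp add: eval_fps_at_0 fps_0th_higher_deriv)
qed

lemma qn_eq_genfun_fps_nth: "qn \<kappa> n x y = fps_nth (genfun_fps \<kappa> x y) n"
  by (simp add: qn_def higher_deriv_0_eq_fps_nth[OF has_fps_expansion_genfun])

lemma fps_prod_nth_0: "finite A \<Longrightarrow> fps_nth (\<Prod>z\<in>A. F z) 0 = (\<Prod>z\<in>A. fps_nth (F z) 0)"
  by (induction A rule: finite_induct) auto

lemma icos_fps_nth_0: "fps_nth (icos_fps \<kappa> x) 0 = 1"
  by (simp add: icos_fps_def fps_prod_nth_0 finite_Icos binomial_fps_def)

lemma genfun_fps_nth_0: "fps_nth (genfun_fps \<kappa> x y) 0 = 1"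
  by (simp add: genfun_fps_def icos_fps_nth_0)

lemma genfun_fps_nth_Suc:
  "fps_nth (genfun_fps \<kappa> x y) (Suc n) = (x \<bullet> y) * fps_nth (genfun_fps \<kappa> x y) n + fps_nth (icos_fps \<kappa> x) (Suc n)"
proof -
  have "icos_fps \<kappa> x = (1 - fps_const (x \<bullet> y) * fps_X) * genfun_fps \<kappa> x y"
    by (simp add: genfun_fps_def mult.assoc[symmetric] inverse_mult_eq_1')
  also have "\<dots> = genfun_fps \<kappa> x y - fps_const (x \<bullet> y) * (fps_X * genfun_fps \<kappa> x y)"
    by (simp add: algebra_simps)
  finally show ?thesis by simp
qed

lemma fps_deriv_prod:
  fixes F :: "'b \<Rightarrow> 'a::comm_ring_1 fps"
  assumes "finite A"
  shows "fps_deriv (\<Prod>z\<in>A. F z) = (\<Sum>z\<in>A. fps_deriv (F z) * (\<Prod>w\<in>A - {z}. F w))"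
  using assms
proof (induction A rule: finite_induct)
  case (insert a A)
  have "(\<Prod>w\<in>insert a A - {z}. F w) = F a * (\<Prod>w\<in>A - {z}. F w)" if "z \<in> A" for z
  proof -
    have "insert a A - {z} = insert a (A - {z})" using that insert by auto
    then show ?thesis using insert by simp
  qed
  then have "F a * fps_deriv (\<Prod>z\<in>A. F z) = (\<Sum>z\<in>A. fps_deriv (F z) * (\<Prod>w\<in>insert a A - {z}. F w))"
    using insert by (simp add: sum_distrib_left algebra_simps)
  then show ?case
    using insert by (simp add: insert_Diff_if add_ac)
qed simp

lemma fps_deriv_binomial_fps:
  "fps_deriv (binomial_fps \<kappa> a) = fps_const (\<kappa> * a) * inverse (1 - fps_const a * fps_X) * binomial_fps \<kappa> a"
proof -
  have ode: "(1 - fps_const a * fps_X) * fps_deriv (binomial_fps \<kappa> a) = fps_const (\<kappa> * a) * binomial_fps \<kappa> a"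
  proof (rule fps_ext)
    fix n
    show "fps_nth ((1 - fps_const a * fps_X) * fps_deriv (binomial_fps \<kappa> a)) n = fps_nth (fps_const (\<kappa> * a) * binomial_fps \<kappa> a) n"
    proof (cases n)
      case 0
      then show ?thesis by (simp add: binomial_fps_def)
    next
      case (Suc m)
      have "fps_nth ((1 - fps_const a * fps_X) * fps_deriv (binomial_fps \<kappa> a)) n
          = fps_nth (fps_deriv (binomial_fps \<kappa> a)) n - a * fps_nth (fps_deriv (binomial_fps \<kappa> a)) m"
        by (simp add: algebra_simps Suc)
      also have "fps_nth (fps_deriv (binomial_fps \<kappa> a)) n = pochhammer \<kappa> n * (\<kappa> + n) * a ^ Suc n / fact n"
        by (simp add: binomial_fps_def pochhammer_Suc field_simps del: of_nat_Suc)
      also have "fps_nth (fps_deriv (binomial_fps \<kappa> a)) m = real n * (pochhammer \<kappa> n * a ^ n / fact n)"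
        by (simp add: binomial_fps_def Suc)
      also have "pochhammer \<kappa> n * (\<kappa> + n) * a ^ Suc n / fact n - a * (real n * (pochhammer \<kappa> n * a ^ n / fact n))
          = \<kappa> * a * (pochhammer \<kappa> n * a ^ n / fact n)"
        by (simp add: field_simps)
      finally show ?thesis by (simp add: binomial_fps_def)
    qed
  qed
  have "fps_deriv (binomial_fps \<kappa> a)
      = inverse (1 - fps_const a * fps_X) * ((1 - fps_const a * fps_X) * fps_deriv (binomial_fps \<kappa> a))"
    by (simp add: mult.assoc[symmetric] inverse_mult_eq_1)
  also note ode
  finally show ?thesis by (simp add: algebra_simps)
qed

lemma fps_deriv_icos_fps:
  "fps_deriv (icos_fps \<kappa> x) = (\<Sum>z\<in>Icos. fps_const (\<kappa> * (x \<bullet> z)) * genfun_fps \<kappa> x z)"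
proof -
  have "fps_deriv (binomial_fps \<kappa> (x \<bullet> z)) * (\<Prod>w\<in>Icos - {z}. binomial_fps \<kappa> (x \<bullet> w))
      = fps_const (\<kappa> * (x \<bullet> z)) * genfun_fps \<kappa> x z" if "z \<in> Icos" for z
  proof -
    have "icos_fps \<kappa> x = binomial_fps \<kappa> (x \<bullet> z) * (\<Prod>w\<in>Icos - {z}. binomial_fps \<kappa> (x \<bullet> w))"
      unfolding icos_fps_def using that finite_Icos by (simp add: prod.remove)
    then show ?thesis
      by (simp add: fps_deriv_binomial_fps genfun_fps_def algebra_simps)
  qed
  then show ?thesis
    unfolding icos_fps_def fps_deriv_prod[OF finite_Icos] by (rule sum.cong[OF refl])
qed

lemma icos_fps_nth_Suc:
  "real (Suc n) * fps_nth (icos_fps \<kappa> x) (Suc n) = \<kappa> * (\<Sum>z\<in>Icos. (x \<bullet> z) * fps_nth (genfun_fps \<kappa> x z) n)"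
proof -
  have "fps_nth (fps_deriv (icos_fps \<kappa> x)) n = fps_nth (\<Sum>z\<in>Icos. fps_const (\<kappa> * (x \<bullet> z)) * genfun_fps \<kappa> x z) n"
    by (simp only: fps_deriv_icos_fps)
  then show ?thesis
    by (simp add: fps_sum_nth sum_distrib_left algebra_simps)
qed

lemma icos_fps_refl: "v \<in> Rplus \<Longrightarrow> icos_fps \<kappa> (refl v x) = icos_fps \<kappa> x"
  unfolding icos_fps_def refl_inner_commute
  by (rule prod.reindex_bij_betw[OF bij_betw_refl_Icos, where g = "\<lambda>w. binomial_fps \<kappa> (x \<bullet> w)"])

lemma genfun_fps_refl: "v \<in> Rplus \<Longrightarrow> genfun_fps \<kappa> (refl v x) y = genfun_fps \<kappa> x (refl v y)"
  by (simp add: genfun_fps_def icos_fps_refl refl_inner_commute)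

lemma icos_fps_uminus: "icos_fps \<kappa> (- x) = icos_fps \<kappa> x"
proof -
  have "icos_fps \<kappa> (- x) = (\<Prod>z\<in>Icos. binomial_fps \<kappa> (x \<bullet> - z))"
    unfolding icos_fps_def by simp
  also have "\<dots> = icos_fps \<kappa> x"
    unfolding icos_fps_def
    by (rule prod.reindex_bij_betw[OF bij_betw_uminus_Icos, where g = "\<lambda>w. binomial_fps \<kappa> (x \<bullet> w)"])
  finally show ?thesis .
qed

lemma genfun_fps_scaleR:
  "genfun_fps \<kappa> (c *\<^sub>R x) y = genfun_fps \<kappa> x y oo (fps_const c * fps_X)"
proof -
  have binomial: "binomial_fps \<kappa> (c * a) = binomial_fps \<kappa> a oo (fps_const c * fps_X)" for a
    by (simp add: fps_compose_linear binomial_fps_def fps_eq_iff power_mult_distrib)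
  have linear: "1 - fps_const (c * a) * fps_X = (1 - fps_const a * fps_X) oo (fps_const c * fps_X)" for a
    by (auto simp: fps_compose_linear fps_eq_iff le_Suc_eq)
  show ?thesis
    unfolding genfun_fps_def icos_fps_def
    by (simp add: binomial linear fps_compose_mult_distrib fps_compose_prod_distrib fps_inverse_compose)
qed

lemma genfun_fps_nth_uminus:
  "fps_nth (genfun_fps \<kappa> x (- y)) n = (-1) ^ n * fps_nth (genfun_fps \<kappa> x y) n"
proof -
  have "genfun_fps \<kappa> x (- y) = genfun_fps \<kappa> x y oo (fps_const (-1) * fps_X)"
    using genfun_fps_scaleR[of \<kappa> "-1" x y] by (simp add: genfun_fps_def icos_fps_uminus)
  then show ?thesis by simp
qed

lemma continuous_on_fps_nth:
  "continuous_on UNIV (\<lambda>x. fps_nth (icos_fps \<kappa> x) n) \<and>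
   (\<forall>y. continuous_on UNIV (\<lambda>x. fps_nth (genfun_fps \<kappa> x y) n))"
proof (induction n)
  case 0
  then show ?case by (simp add: icos_fps_nth_0 genfun_fps_nth_0)
next
  case (Suc n)
  have icos_eq: "(\<lambda>x. fps_nth (icos_fps \<kappa> x) (Suc n))
      = (\<lambda>x. \<kappa> * (\<Sum>z\<in>Icos. (x \<bullet> z) * fps_nth (genfun_fps \<kappa> x z) n) / real (Suc n))"
    using icos_fps_nth_Suc[of n \<kappa>] by (simp add: fun_eq_iff field_simps del: of_nat_Suc)
  have icos: "continuous_on UNIV (\<lambda>x. fps_nth (icos_fps \<kappa> x) (Suc n))"
    unfolding icos_eq using Suc.IH by (intro continuous_intros) auto
  show ?case
    unfolding genfun_fps_nth_Suc using Suc.IH icos by (intro conjI allI continuous_intros) auto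
qed

lemma continuous_on_qn: "continuous_on UNIV (\<lambda>x. qn \<kappa> n x y)"
  using continuous_on_fps_nth by (simp add: qn_eq_genfun_fps_nth)

section \<open>The recursion for the normalized coefficients\<close>

lemma genfun_fps_dunkl_euler:
  assumes y0: "y0 \<in> Icos"
  shows "dunkl_euler Rplus \<kappa> (Suc m) (\<lambda>x. fps_nth (genfun_fps \<kappa> x y0) (Suc m)) x
       = (real (Suc m) + (11 + (-1) ^ Suc m) * \<kappa>) * (x \<bullet> y0) * fps_nth (genfun_fps \<kappa> x y0) m"
proof -
  define h where "h y = fps_nth (genfun_fps \<kappa> x y) (Suc m)" for y
  define q where "q = fps_nth (genfun_fps \<kappa> x y0) m"
  define g where "g = fps_nth (icos_fps \<kappa> x) (Suc m)"
  define T where "T = (\<Sum>z\<in>Icos. (x \<bullet> z) * fps_nth (genfun_fps \<kappa> x z) m)"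
  have "dunkl_euler Rplus \<kappa> (Suc m) (\<lambda>x. fps_nth (genfun_fps \<kappa> x y0) (Suc m)) x
      = real (Suc m) * h y0 + \<kappa> * (\<Sum>v\<in>Rplus. h y0 - h (refl v y0))"
    unfolding dunkl_euler_def h_def by (simp add: genfun_fps_refl)
  also have "(\<Sum>v\<in>Rplus. h y0 - h (refl v y0)) = 11 * h y0 + h (- y0) - (\<Sum>y\<in>Icos. h y)"
    using sum_refl_Icos[OF y0, of h] by (simp add: sum_subtractf card_Rplus)
  also have "h y0 = (x \<bullet> y0) * q + g"
    by (simp add: h_def q_def g_def genfun_fps_nth_Suc)
  also have "h (- y0) = - (x \<bullet> y0) * ((-1) ^ m * q) + g"
    by (simp add: h_def q_def g_def genfun_fps_nth_Suc genfun_fps_nth_uminus)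
  also have "(\<Sum>y\<in>Icos. h y) = T + 12 * g"
    by (simp add: h_def T_def g_def genfun_fps_nth_Suc sum.distrib card_Icos)
  also have "real (Suc m) * ((x \<bullet> y0) * q + g)
      + \<kappa> * (11 * ((x \<bullet> y0) * q + g) + (- (x \<bullet> y0) * ((-1) ^ m * q) + g) - (T + 12 * g))
      = (real (Suc m) + (11 + (-1) ^ Suc m) * \<kappa>) * (x \<bullet> y0) * q + (real (Suc m) * g - \<kappa> * T)"
    by (simp add: algebra_simps)
  also have "real (Suc m) * g = \<kappa> * T"
    unfolding g_def T_def by (rule icos_fps_nth_Suc)
  finally show ?thesis by (simp add: q_def)
qed

lemma nu_Suc: "nu \<kappa> (Suc m) = (real (Suc m) + (11 + (-1) ^ Suc m) * \<kappa>) * nu \<kappa> m"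
proof (cases "even m")
  case True
  then obtain j where m: "m = 2 * j" by (elim evenE)
  then have "Suc m div 2 = j" "m div 2 = j" "(Suc m + 1) div 2 = Suc j" "(m + 1) div 2 = j"
    by presburger+
  with m show ?thesis by (simp add: nu_def pochhammer_Suc field_simps)
next
  case False
  then obtain j where m: "m = 2 * j + 1" by (elim oddE)
  then have "Suc m div 2 = Suc j" "m div 2 = j" "(Suc m + 1) div 2 = Suc j" "(m + 1) div 2 = Suc j"
    by presburger+
  with m show ?thesis by (simp add: nu_def pochhammer_Suc field_simps)
qed

lemma nu_pos: "\<kappa> \<ge> 0 \<Longrightarrow> nu \<kappa> n > 0"
  unfolding nu_def by (intro mult_pos_pos pochhammer_pos) auto

lemma qn_dunkl_euler:
  assumes "y0 \<in> Icos" "\<kappa> \<ge> 0"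
  shows "dunkl_euler Rplus \<kappa> (Suc m) (\<lambda>x. fact (Suc m) / nu \<kappa> (Suc m) * qn \<kappa> (Suc m) x y0) x
     = real (Suc m) * (x \<bullet> y0) * (fact m / nu \<kappa> m * qn \<kappa> m x y0)"
proof -
  define s where "s = real (Suc m) + (11 + (-1) ^ Suc m) * \<kappa>"
  have "11 + (-1::real) ^ Suc m \<ge> 0"
    by (cases "even m") auto
  with assms(2) have "s > 0"
    unfolding s_def by (intro add_pos_nonneg mult_nonneg_nonneg) auto
  moreover have "nu \<kappa> m > 0"
    using assms(2) by (rule nu_pos)
  ultimately have normalization: "fact (Suc m) / nu \<kappa> (Suc m) * s = real (Suc m) * (fact m / nu \<kappa> m)"
    unfolding nu_Suc s_def[symmetric] by simp
  have "dunkl_euler Rplus \<kappa> (Suc m) (\<lambda>x. fact (Suc m) / nu \<kappa> (Suc m) * qn \<kappa> (Suc m) x y0) x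
      = fact (Suc m) / nu \<kappa> (Suc m) * (s * (x \<bullet> y0) * fps_nth (genfun_fps \<kappa> x y0) m)"
    unfolding qn_eq_genfun_fps_nth dunkl_euler_cmult genfun_fps_dunkl_euler[OF assms(1)] s_def ..
  also have "\<dots> = (fact (Suc m) / nu \<kappa> (Suc m) * s) * (x \<bullet> y0) * fps_nth (genfun_fps \<kappa> x y0) m"
    by (simp only: mult_ac)
  finally show ?thesis
    unfolding normalization qn_eq_genfun_fps_nth by (simp only: mult_ac)
qed

theorem mainTheorem3:
  fixes \<kappa> :: real and V :: "(real^3 \<Rightarrow> real) \<Rightarrow> (real^3 \<Rightarrow> real)"
    and y0 :: "real^3" and n :: nat
  assumes "\<kappa> \<ge> 0"
    and "intertwining \<kappa> V"
    and "y0 \<in> Icos"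
  shows "V (\<lambda>x. (x \<bullet> y0) ^ n) = (\<lambda>x. fact n / nu \<kappa> n * qn \<kappa> n x y0)"
proof (induction n)
  case 0
  have "V (\<lambda>x. 1) = (\<lambda>x. 1)"
    using assms(2) unfolding intertwining_def by blast
  then show ?case
    by (simp add: nu_def qn_eq_genfun_fps_nth genfun_fps_nth_0)
next
  case (Suc m)
  show ?case
  proof (rule dunkl_euler_unique[OF finite_Rplus zero_notin_Rplus _ assms(1)])
    show "continuous_on UNIV (V (\<lambda>x. (x \<bullet> y0) ^ Suc m))"
      by (rule poly3_continuous_on[OF homog3_poly3[OF intertwining_homog3_inner_power[OF assms(2)]]])
    show "continuous_on UNIV (\<lambda>x. fact (Suc m) / nu \<kappa> (Suc m) * qn \<kappa> (Suc m) x y0)"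
      by (intro continuous_intros continuous_on_qn)
    show "dunkl_euler Rplus \<kappa> (Suc m) (V (\<lambda>x. (x \<bullet> y0) ^ Suc m)) x
        = dunkl_euler Rplus \<kappa> (Suc m) (\<lambda>x. fact (Suc m) / nu \<kappa> (Suc m) * qn \<kappa> (Suc m) x y0) x" for x
      unfolding intertwining_inner_power_dunkl_euler[OF assms(2)] qn_dunkl_euler[OF assms(3,1)] Suc.IH ..
  qed simp
qed

end
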